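(* Suppose there is a quantum algorithm $A_0$ making $q$ queries to $U$ and $U^\dagger$ which, for $U$ Haar-random on $\mathbb{C}^d$, has (expected over $U$) advantage $\varepsilon$ in breaking honest binding of the EPR commitment scheme, i.e. acting only on $\mathsf A\otimes\mathsf D$ on $\ket0_{\mathsf A}\ket{\psi^U_0}$ it produces $\rho_0$ with $\mathbb{E}_U\mathrm{tr}(\ket{\psi^U_1}\bra{\psi^U_1}\rho_0)\ge\varepsilon$. Then for every distribution $D$ over unitaries on $\mathbb{C}^d$ there is a quantum algorithm $A_1$ making $q$ queries to $V,V^\dagger$ which, for $V\sim D$, achieves the same advantage $\varepsilon$ against the scheme instantiated with $V$.
   Context: Registers $\mathsf D,\mathsf C$ are both $\mathbb{C}^d$, $\ket{\mathrm{EPR}}=d^{-1/2}\sum_x\ket x_{\mathsf D}\ket x_{\mathsf C}$. For a unitary $U$, the commitment states are $\ket{\psi^U_0}=\ket{\mathrm{EPR}}$ and $\ket{\psi^U_1}=(I_{\mathsf D}\otimes U)\ket{\mathrm{EPR}}$; the adversary has a private register $\mathsf A$ and may act only on $\mathsf A\otimes\mathsf D$, and $\rho_0$ denotes the resulting state on $\mathsf{DC}$ after tracing out $\mathsf A$. The lemma counts only queries to the oracle (no bound on other computation). *)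

theory Defs
  imports "HOL-Probability.Probability"
begin

text \<open>Dimension d = CARD('n).
  The adversary register A has basis {..<m} (m an explicit natural number, so that
  different algorithms may use different ancilla sizes); D and C have basis 'n.
  Pure states of A D C are functions nat x 'n x 'n => complex (entries with a >= m ignored).\<close>

definition adj :: "complex^'n^'n \<Rightarrow> complex^'n^'n" where
  "adj U = (\<chi> i j. cnj (U $ j $ i))"

definition unitary_mat :: "complex^'n::finite^'n \<Rightarrow> bool" where
  "unitary_mat U \<longleftrightarrow> U ** adj U = mat 1 \<and> adj U ** U = mat 1"

definition haar :: "(complex^'n::finite^'n) measure \<Rightarrow> bool" where
  "haar H \<longleftrightarrow> prob_space H \<and> sets H = sets borel \<and> (AE U in H. unitary_mat U) \<and>
     (\<forall>W. unitary_mat W \<longrightarrow> distr H borel (\<lambda>U. W ** U) = H \<and> distr H borel (\<lambda>U. U ** W) = H)"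

type_synonym 'n adop = "nat \<times> 'n \<Rightarrow> nat \<times> 'n \<Rightarrow> complex"
type_synonym 'n st = "nat \<times> 'n \<times> 'n \<Rightarrow> complex"

definition unitary_AD :: "nat \<Rightarrow> ('n::finite) adop \<Rightarrow> bool" where
  "unitary_AD m G \<longleftrightarrow>
     (\<forall>i\<in>{..<m} \<times> (UNIV::'n set). \<forall>j\<in>{..<m} \<times> (UNIV::'n set).
        (\<Sum>k\<in>{..<m} \<times> (UNIV::'n set). G i k * cnj (G j k)) = (if i = j then 1 else 0) \<and>
        (\<Sum>k\<in>{..<m} \<times> (UNIV::'n set). cnj (G k i) * G k j) = (if i = j then 1 else 0))"

definition apply_AD :: "nat \<Rightarrow> ('n::finite) adop \<Rightarrow> 'n st \<Rightarrow> 'n st" where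
  "apply_AD m G \<phi> = (\<lambda>(a, x, c). \<Sum>(b, y)\<in>{..<m} \<times> (UNIV::'n set). G (a, x) (b, y) * \<phi> (b, y, c))"

text \<open>One oracle query: I_A (x) U (x) I_C (if flag False) or I_A (x) U^dagger (x) I_C (if True),
  acting on the query register D.\<close>
definition query :: "complex^'n::finite^'n \<Rightarrow> bool \<Rightarrow> 'n st \<Rightarrow> 'n st" where
  "query U dag \<phi> = (\<lambda>(a, x, c). \<Sum>y\<in>UNIV. (if dag then adj U else U) $ x $ y * \<phi> (a, y, c))"

definition epr :: "'n::finite \<times> 'n \<Rightarrow> complex" where
  "epr = (\<lambda>(x, c). if x = c then complex_of_real (1 / sqrt (real CARD('n))) else 0)"

text \<open>|psi_1^U> = (I_D (x) U)|EPR>.\<close>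
definition psi1 :: "complex^'n::finite^'n \<Rightarrow> 'n \<times> 'n \<Rightarrow> complex" where
  "psi1 U = (\<lambda>(x, c). \<Sum>y\<in>UNIV. U $ c $ y * epr (x, y))"

definition init_st :: "('n::finite) st" where
  "init_st = (\<lambda>(a, x, c). if a = 0 then epr (x, c) else 0)"

text \<open>A q-query algorithm: ancilla dimension m, unitaries G 0, ..., G q on A (x) D,
  and flags b 1, ..., b q saying whether query k is to U or to U^dagger.
  It runs G 0, then (query k; G k) for k = 1..q.\<close>
type_synonym 'n alg = "nat \<times> (nat \<Rightarrow> 'n adop) \<times> (nat \<Rightarrow> bool)"

definition valid_alg :: "nat \<Rightarrow> ('n::finite) alg \<Rightarrow> bool" where
  "valid_alg q A = (case A of (m, G, b) \<Rightarrow> 1 \<le> m \<and> (\<forall>k\<le>q. unitary_AD m (G k)))"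

fun run :: "('n::finite) alg \<Rightarrow> complex^'n^'n \<Rightarrow> nat \<Rightarrow> 'n st" where
  "run (m, G, b) U 0 = apply_AD m (G 0) init_st"
| "run (m, G, b) U (Suc k) = apply_AD m (G (Suc k)) (query U (b (Suc k)) (run (m, G, b) U k))"

text \<open>rho_0 = tr_A |phi><phi| for the final state phi after q queries.\<close>
definition rho0 :: "nat \<Rightarrow> ('n::finite) alg \<Rightarrow> complex^'n^'n \<Rightarrow> ('n \<times> 'n) \<Rightarrow> ('n \<times> 'n) \<Rightarrow> complex" where
  "rho0 q A U = (\<lambda>(x, c) (x', c'). \<Sum>a<fst A. run A U q (a, x, c) * cnj (run A U q (a, x', c')))"

text \<open>Advantage tr(|psi_1^U><psi_1^U| rho_0) = <psi_1^U| rho_0 |psi_1^U>.\<close>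
definition adv :: "nat \<Rightarrow> ('n::finite) alg \<Rightarrow> complex^'n^'n \<Rightarrow> real" where
  "adv q A U = Re (\<Sum>i\<in>UNIV. \<Sum>j\<in>UNIV. cnj (psi1 U i) * rho0 q A U i j * psi1 U j)"

end

theory Submission
  imports Defs
begin

text \<open>For V distributed according to D and W Haar-random, V W is again Haar-random by left
  invariance, so averaging over W the expected advantage of A0 against the oracle V W is the Haar
  advantage; hence some fixed unitary W gives expected advantage at least \<open>\<epsilon>\<close> against V W for
  V drawn from D.  With oracle V one simulates A0 on the oracle V W query by query, applying W or
  its adjoint to D next to each query.  A copy of W is left on register C, which the algorithm
  cannot touch; it is moved to D by the transpose trick (I \<otimes> W) |EPR\<rangle> = (W^T \<otimes> I) |EPR\<rangle>.\<close>

lemma adj_mult: "adj (A ** B) = adj B ** adj (A :: complex^'n::finite^'n)"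
  unfolding adj_def matrix_matrix_mult_def by (simp add: vec_eq_iff cnj_sum mult.commute)

lemma adj_adj [simp]: "adj (adj A) = A"
  unfolding adj_def by (simp add: vec_eq_iff)

lemma adj_one [simp]: "adj (mat 1 :: complex^'n::finite^'n) = mat 1"
  unfolding adj_def mat_def by (simp add: vec_eq_iff)

lemma unitary_mat_one: "unitary_mat (mat 1 :: complex^'n::finite^'n)"
  unfolding unitary_mat_def by simp

lemma unitary_mat_adj: "unitary_mat U \<Longrightarrow> unitary_mat (adj U)"
  unfolding unitary_mat_def by simp

definition mat_cnj :: "complex^'n^'m \<Rightarrow> complex^'n^'m" where
  "mat_cnj A = (\<chi> i j. cnj (A $ i $ j))"

lemma mat_cnj_mult: "mat_cnj (A ** B) = mat_cnj A ** mat_cnj (B :: complex^'n::finite^'n)"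
  unfolding mat_cnj_def matrix_matrix_mult_def by (simp add: vec_eq_iff cnj_sum)

lemma adj_mat_cnj: "adj (mat_cnj A) = mat_cnj (adj A)"
  unfolding mat_cnj_def adj_def by (simp add: vec_eq_iff)

lemma mat_cnj_one: "mat_cnj (mat 1 :: complex^'n::finite^'n) = mat 1"
  unfolding mat_cnj_def mat_def by (simp add: vec_eq_iff)

lemma unitary_mat_mat_cnj: "unitary_mat U \<Longrightarrow> unitary_mat (mat_cnj U)"
  unfolding unitary_mat_def adj_mat_cnj mat_cnj_mult[symmetric] by (simp add: mat_cnj_one)

lemma unitary_mat_rows:
  assumes "unitary_mat U"
  shows "(\<Sum>y\<in>UNIV. U $ x $ y * cnj (U $ x' $ y)) = (if x = x' then 1 else 0)"
proof -
  have "(U ** adj U) $ x $ x' = mat 1 $ x $ x'"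
    using assms unfolding unitary_mat_def by simp
  then show ?thesis by (simp add: matrix_matrix_mult_def adj_def mat_def)
qed

definition orthonormal_rows :: "'a set \<Rightarrow> ('a \<Rightarrow> 'a \<Rightarrow> complex) \<Rightarrow> bool" where
  "orthonormal_rows S G \<longleftrightarrow>
     (\<forall>i\<in>S. \<forall>j\<in>S. (\<Sum>k\<in>S. G i k * cnj (G j k)) = (if i = j then 1 else 0))"

definition fmat_adj :: "('a \<Rightarrow> 'a \<Rightarrow> complex) \<Rightarrow> 'a \<Rightarrow> 'a \<Rightarrow> complex" where
  "fmat_adj G = (\<lambda>i j. cnj (G j i))"

definition fmat_mult ::
    "'a set \<Rightarrow> ('a \<Rightarrow> 'a \<Rightarrow> complex) \<Rightarrow> ('a \<Rightarrow> 'a \<Rightarrow> complex) \<Rightarrow> 'a \<Rightarrow> 'a \<Rightarrow> complex" where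
  "fmat_mult S A B = (\<lambda>i k. \<Sum>j\<in>S. A i j * B j k)"

lemma fmat_adj_fmat_mult: "fmat_adj (fmat_mult S A B) = fmat_mult S (fmat_adj B) (fmat_adj A)"
  unfolding fmat_adj_def fmat_mult_def by (simp add: cnj_sum mult.commute)

lemma orthonormal_rows_fmat_mult:
  assumes "finite S" "orthonormal_rows S A" "orthonormal_rows S B"
  shows "orthonormal_rows S (fmat_mult S A B)"
  unfolding orthonormal_rows_def
proof (intro ballI)
  fix i i' assume i: "i \<in> S" and i': "i' \<in> S"
  have "(\<Sum>k\<in>S. fmat_mult S A B i k * cnj (fmat_mult S A B i' k))
      = (\<Sum>k\<in>S. \<Sum>j\<in>S. \<Sum>j'\<in>S. A i j * cnj (A i' j') * (B j k * cnj (B j' k)))"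
    unfolding fmat_mult_def cnj_sum complex_cnj_mult sum_product
    by (intro sum.cong refl) (simp only: mult_ac)
  also have "\<dots> = (\<Sum>j\<in>S. \<Sum>j'\<in>S. \<Sum>k\<in>S. A i j * cnj (A i' j') * (B j k * cnj (B j' k)))"
    by (subst sum.swap, rule sum.cong[OF refl], rule sum.swap)
  also have "\<dots> = (\<Sum>j\<in>S. \<Sum>j'\<in>S. A i j * cnj (A i' j') * (\<Sum>k\<in>S. B j k * cnj (B j' k)))"
    by (simp only: sum_distrib_left)
  also have "\<dots> = (\<Sum>j\<in>S. \<Sum>j'\<in>S. if j' = j then A i j * cnj (A i' j') else 0)"
    using assms(3) unfolding orthonormal_rows_def by (intro sum.cong refl) auto
  also have "\<dots> = (\<Sum>j\<in>S. A i j * cnj (A i' j))"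
    using assms(1) by simp
  also have "\<dots> = (if i = i' then 1 else 0)"
    using assms(2) i i' unfolding orthonormal_rows_def by blast
  finally show "(\<Sum>k\<in>S. fmat_mult S A B i k * cnj (fmat_mult S A B i' k)) = (if i = i' then 1 else 0)" .
qed

definition basis_AD :: "nat \<Rightarrow> (nat \<times> 'n) set" where
  "basis_AD m = {..<m} \<times> UNIV"

lemma finite_basis_AD [simp]: "finite (basis_AD m :: (nat \<times> 'n::finite) set)"
  by (simp add: basis_AD_def)

lemma unitary_AD_iff:
  "unitary_AD m G \<longleftrightarrow>
     orthonormal_rows (basis_AD m) G \<and> orthonormal_rows (basis_AD m) (fmat_adj G)"
  unfolding unitary_AD_def orthonormal_rows_def fmat_adj_def basis_AD_def by auto

lemma unitary_AD_fmat_mult: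
  "unitary_AD m A \<Longrightarrow> unitary_AD m B \<Longrightarrow> unitary_AD m (fmat_mult (basis_AD m) A B)"
  unfolding unitary_AD_iff fmat_adj_fmat_mult by (simp add: orthonormal_rows_fmat_mult)

definition lift_D :: "complex^'n^'n \<Rightarrow> 'n adop" where
  "lift_D M = (\<lambda>(a, x) (b, y). if a = b then M $ x $ y else 0)"

lemma fmat_adj_lift_D: "fmat_adj (lift_D M) = lift_D (adj M)"
  unfolding fmat_adj_def lift_D_def adj_def by (auto intro!: ext)

lemma orthonormal_rows_lift_D:
  fixes M :: "complex^'n::finite^'n"
  assumes "unitary_mat M"
  shows "orthonormal_rows (basis_AD m) (lift_D M)"
  unfolding orthonormal_rows_def
proof (intro ballI)
  fix i j :: "nat \<times> 'n" assume "i \<in> basis_AD m"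
  obtain a x b y where ij: "i = (a, x)" "j = (b, y)" "a < m"
    using \<open>i \<in> basis_AD m\<close> by (cases i, cases j) (auto simp: basis_AD_def)
  have "(\<Sum>k\<in>basis_AD m. lift_D M i k * cnj (lift_D M j k))
      = (\<Sum>c<m. if c = a then (if a = b then (\<Sum>z\<in>UNIV. M $ x $ z * cnj (M $ y $ z)) else 0) else 0)"
    unfolding basis_AD_def sum.cartesian_product' ij lift_D_def by (intro sum.cong) (auto intro!: sum.neutral)
  also have "\<dots> = (if a = b then (\<Sum>z\<in>UNIV. M $ x $ z * cnj (M $ y $ z)) else 0)"
    using \<open>a < m\<close> by simp
  also have "\<dots> = (if i = j then 1 else 0)"
    using ij by (simp add: unitary_mat_rows[OF assms])
  finally show "(\<Sum>k\<in>basis_AD m. lift_D M i k * cnj (lift_D M j k)) = (if i = j then 1 else 0)" .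
qed

lemma unitary_AD_lift_D: "unitary_mat M \<Longrightarrow> unitary_AD m (lift_D M)"
  unfolding unitary_AD_iff fmat_adj_lift_D
  by (simp add: orthonormal_rows_lift_D unitary_mat_adj)

lemma apply_AD_eq: "apply_AD m G \<phi> (a, x, c) = (\<Sum>j\<in>basis_AD m. G (a, x) j * \<phi> (fst j, snd j, c))"
  unfolding apply_AD_def basis_AD_def by (simp add: case_prod_unfold)

lemma apply_AD_fmat_mult:
  "apply_AD m (fmat_mult (basis_AD m) A B) \<phi> = apply_AD m A (apply_AD m B \<phi>)"
  by (intro ext) (clarsimp simp: apply_AD_eq fmat_mult_def sum_distrib_left sum_distrib_right
      mult.assoc intro!: sum.swap)

definition apply_D :: "complex^'n^'n \<Rightarrow> ('n::finite) st \<Rightarrow> 'n st" where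
  "apply_D M \<phi> = (\<lambda>(a, x, c). \<Sum>y\<in>UNIV. M $ x $ y * \<phi> (a, y, c))"

lemma query_eq_apply_D: "query U dag = apply_D (if dag then adj U else U)"
  unfolding query_def apply_D_def by (intro ext) simp

lemma apply_D_apply_D: "apply_D M (apply_D N \<phi>) = apply_D (M ** N) \<phi>"
  by (intro ext) (clarsimp simp: apply_D_def matrix_matrix_mult_def sum_distrib_left
      sum_distrib_right mult.assoc intro!: sum.swap)

lemma apply_D_one [simp]: "apply_D (mat 1) \<phi> = \<phi>"
  by (intro ext) (clarsimp simp: apply_D_def mat_def if_distrib[of "\<lambda>t. t * _"] cong: if_cong)

text \<open>Operators on A \<otimes> D ignore the entries of a state with ancilla index \<open>\<ge> m\<close>.\<close>

definition ancilla_eq :: "nat \<Rightarrow> ('n::finite) st \<Rightarrow> 'n st \<Rightarrow> bool" where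
  "ancilla_eq m \<phi> \<psi> \<longleftrightarrow> (\<forall>a<m. \<forall>x c. \<phi> (a, x, c) = \<psi> (a, x, c))"

lemma ancilla_eq_refl: "ancilla_eq m \<phi> \<phi>"
  unfolding ancilla_eq_def by simp

lemma ancilla_eq_trans: "ancilla_eq m \<phi> \<psi> \<Longrightarrow> ancilla_eq m \<psi> \<eta> \<Longrightarrow> ancilla_eq m \<phi> \<eta>"
  unfolding ancilla_eq_def by simp

lemma apply_AD_ancilla_eq: "ancilla_eq m \<phi> \<psi> \<Longrightarrow> apply_AD m G \<phi> = apply_AD m G \<psi>"
  unfolding ancilla_eq_def by (intro ext) (auto simp: apply_AD_eq basis_AD_def intro!: sum.cong)

lemma ancilla_eq_apply_D: "ancilla_eq m \<phi> \<psi> \<Longrightarrow> ancilla_eq m (apply_D M \<phi>) (apply_D M \<psi>)"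
  unfolding ancilla_eq_def apply_D_def by simp

lemma apply_AD_lift_D: "ancilla_eq m (apply_AD m (lift_D M) \<phi>) (apply_D M \<phi>)"
  unfolding ancilla_eq_def
proof (intro allI impI)
  fix a x c assume "a < m"
  have "apply_AD m (lift_D M) \<phi> (a, x, c) = (\<Sum>y\<in>UNIV. \<Sum>b<m. if b = a then M $ x $ y * \<phi> (a, y, c) else 0)"
    unfolding apply_AD_def lift_D_def sum.cartesian_product' by (subst sum.swap) (auto intro!: sum.cong)
  also have "\<dots> = apply_D M \<phi> (a, x, c)"
    using \<open>a < m\<close> by (simp add: apply_D_def)
  finally show "apply_AD m (lift_D M) \<phi> (a, x, c) = apply_D M \<phi> (a, x, c)" .
qed

lemma apply_AD_sandwich:
  assumes "ancilla_eq m (apply_D Q \<phi>) \<psi>"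
  shows "ancilla_eq m
    (apply_AD m (fmat_mult (basis_AD m) (lift_D P) (fmat_mult (basis_AD m) G (lift_D Q))) \<phi>)
    (apply_D P (apply_AD m G \<psi>))"
proof -
  have "apply_AD m G (apply_AD m (lift_D Q) \<phi>) = apply_AD m G \<psi>"
    using ancilla_eq_trans[OF apply_AD_lift_D assms] by (rule apply_AD_ancilla_eq)
  then show ?thesis
    unfolding apply_AD_fmat_mult by (metis apply_AD_lift_D)
qed

text \<open>\<open>sim_pre\<close> is applied before and \<open>sim_post\<close> after the k-th unitary of the algorithm:
  a query to V W becomes W followed by V, a query to adj (V W) becomes adj V followed by adj W,
  and the final conjugate of W realises the transpose trick.\<close>

definition sim_pre :: "complex^'n^'n \<Rightarrow> (nat \<Rightarrow> bool) \<Rightarrow> nat \<Rightarrow> complex^'n^'n" where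
  "sim_pre W b k = (if 0 < k \<and> b k then adj W else mat 1)"

definition sim_post :: "complex^'n^'n \<Rightarrow> nat \<Rightarrow> (nat \<Rightarrow> bool) \<Rightarrow> nat \<Rightarrow> complex^'n^'n" where
  "sim_post W q b k = (if k < q then if b (Suc k) then mat 1 else W else mat_cnj W)"

fun shift_alg :: "nat \<Rightarrow> complex^'n^'n \<Rightarrow> ('n::finite) alg \<Rightarrow> 'n alg" where
  "shift_alg q W (m, G, b) =
     (m, \<lambda>k. fmat_mult (basis_AD m) (lift_D (sim_post W q b k))
               (fmat_mult (basis_AD m) (G k) (lift_D (sim_pre W b k))), b)"

lemma valid_shift_alg:
  assumes "valid_alg q A" "unitary_mat W"
  shows "valid_alg q (shift_alg q W A)"
proof -
  obtain m G b where A: "A = (m, G, b)" by (cases A)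
  have "unitary_mat (sim_pre W b k)" "unitary_mat (sim_post W q b k)" for k
    using assms(2) unfolding sim_pre_def sim_post_def
    by (simp_all add: unitary_mat_one unitary_mat_adj unitary_mat_mat_cnj)
  then show ?thesis
    using assms(1) unfolding A valid_alg_def by (auto intro!: unitary_AD_fmat_mult unitary_AD_lift_D)
qed

lemma sim_pre_query_sim_post:
  assumes "k < q"
  shows "sim_pre W b (Suc k) ** (if b (Suc k) then adj V else V) ** sim_post W q b k
       = (if b (Suc k) then adj (V ** W) else V ** W)"
  using assms by (simp add: sim_pre_def sim_post_def adj_mult)

lemma run_shift_alg:
  assumes "k \<le> q"
  shows "ancilla_eq m (run (shift_alg q W (m, G, b)) V k)
                      (apply_D (sim_post W q b k) (run (m, G, b) (V ** W) k))"
  using assms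
proof (induction k)
  case 0
  have "ancilla_eq m (apply_D (sim_pre W b 0) init_st) init_st"
    by (simp add: sim_pre_def ancilla_eq_refl)
  then show ?case
    by (simp add: apply_AD_sandwich)
next
  case (Suc k)
  let ?s = "run (m, G, b) (V ** W) k"
  let ?V = "if b (Suc k) then adj V else V"
  have "ancilla_eq m (apply_D (sim_pre W b (Suc k)) (query V (b (Suc k)) (run (shift_alg q W (m, G, b)) V k)))
      (apply_D (sim_pre W b (Suc k)) (apply_D ?V (apply_D (sim_post W q b k) ?s)))"
    using Suc by (simp add: query_eq_apply_D ancilla_eq_apply_D)
  also have "apply_D (sim_pre W b (Suc k)) (apply_D ?V (apply_D (sim_post W q b k) ?s))
      = query (V ** W) (b (Suc k)) ?s"
    using Suc.prems by (simp add: apply_D_apply_D matrix_mul_assoc sim_pre_query_sim_post query_eq_apply_D)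
  finally show ?case
    by (simp add: apply_AD_sandwich)
qed

definition psi1_overlap :: "complex^'n^'n \<Rightarrow> ('n::finite) st \<Rightarrow> nat \<Rightarrow> complex" where
  "psi1_overlap U \<phi> a = (\<Sum>(x, c)\<in>UNIV. cnj (psi1 U (x, c)) * \<phi> (a, x, c))"

lemma adv_eq_sum_overlap: "adv q A U = (\<Sum>a<fst A. (cmod (psi1_overlap U (run A U q) a))\<^sup>2)"
proof -
  let ?f = "\<lambda>a i. cnj (psi1 U i) * run A U q (a, fst i, snd i)"
  have "(\<Sum>i\<in>UNIV. \<Sum>j\<in>UNIV. cnj (psi1 U i) * rho0 q A U i j * psi1 U j)
      = (\<Sum>i\<in>UNIV. \<Sum>j\<in>UNIV. \<Sum>a<fst A. ?f a i * cnj (?f a j))"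
    unfolding rho0_def by (intro sum.cong refl) (auto simp: sum_distrib_left sum_distrib_right mult_ac)
  also have "\<dots> = (\<Sum>a<fst A. (\<Sum>i\<in>UNIV. ?f a i) * cnj (\<Sum>j\<in>UNIV. ?f a j))"
    unfolding cnj_sum sum_product by (subst sum.swap, rule sum.cong[OF refl], rule sum.swap)
  also have "\<dots> = (\<Sum>a<fst A. of_real ((cmod (psi1_overlap U (run A U q) a))\<^sup>2))"
    unfolding psi1_overlap_def complex_norm_square by (simp add: case_prod_unfold)
  finally show ?thesis
    unfolding adv_def by simp
qed

lemma adv_nonneg: "0 \<le> adv q A U"
  unfolding adv_eq_sum_overlap by (intro sum_nonneg) simp

lemma psi1_overlap_ancilla_eq:
  "ancilla_eq m \<phi> \<psi> \<Longrightarrow> a < m \<Longrightarrow> psi1_overlap U \<phi> a = psi1_overlap U \<psi> a"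
  unfolding psi1_overlap_def ancilla_eq_def by (simp add: case_prod_unfold)

lemma psi1_eq: "psi1 U (x, c) = U $ c $ x / sqrt (real CARD('n))"
  for U :: "complex^'n::finite^'n"
  unfolding psi1_def epr_def by (simp add: if_distrib[of "\<lambda>t. _ * t"] cong: if_cong)

lemma psi1_overlap_apply_D_mat_cnj:
  "psi1_overlap V (apply_D (mat_cnj W) \<phi>) a = psi1_overlap (V ** W) \<phi> a"
proof -
  define g where "g x c y = cnj (V $ c $ x) * cnj (W $ x $ y) * \<phi> (a, y, c) / sqrt (real CARD('a))" for x c y
  have "psi1_overlap V (apply_D (mat_cnj W) \<phi>) a = (\<Sum>x\<in>UNIV. \<Sum>c\<in>UNIV. \<Sum>y\<in>UNIV. g x c y)"
    unfolding psi1_overlap_def apply_D_def psi1_eq mat_cnj_def g_def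
      UNIV_Times_UNIV[symmetric] sum.cartesian_product'
    by (simp add: sum_distrib_left sum_divide_distrib mult_ac)
  also have "\<dots> = (\<Sum>c\<in>UNIV. \<Sum>x\<in>UNIV. \<Sum>y\<in>UNIV. g x c y)"
    by (rule sum.swap)
  also have "\<dots> = (\<Sum>c\<in>UNIV. \<Sum>y\<in>UNIV. \<Sum>x\<in>UNIV. g x c y)"
    by (intro sum.cong refl sum.swap)
  also have "\<dots> = (\<Sum>y\<in>UNIV. \<Sum>c\<in>UNIV. \<Sum>x\<in>UNIV. g x c y)"
    by (rule sum.swap)
  also have "\<dots> = psi1_overlap (V ** W) \<phi> a"
    unfolding psi1_overlap_def psi1_eq matrix_matrix_mult_def g_def
      UNIV_Times_UNIV[symmetric] sum.cartesian_product'
    by (simp add: cnj_sum sum_distrib_left sum_distrib_right sum_divide_distrib mult_ac)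
  finally show ?thesis .
qed

lemma adv_shift_alg: "adv q (shift_alg q W A) V = adv q A (V ** W)"
proof -
  obtain m G b where A: "A = (m, G, b)" by (cases A)
  have "psi1_overlap V (run (shift_alg q W A) V q) a = psi1_overlap (V ** W) (run A (V ** W) q) a"
    if "a < m" for a
    using psi1_overlap_ancilla_eq[OF run_shift_alg[of q q m W G b V] that]
    by (simp add: A sim_post_def psi1_overlap_apply_D_mat_cnj)
  then show ?thesis
    unfolding adv_eq_sum_overlap by (simp add: A)
qed

lemma continuous_on_run: "continuous_on UNIV (\<lambda>U. run A U k p)"
proof -
  obtain m G b where A: "A = (m, G, b)" by (cases A)
  show ?thesis
    unfolding A
  proof (induction k arbitrary: p)
    case 0
    show ?case by simp
  next
    case (Suc k)
    then show ?case
      by (cases p; cases "b (Suc k)")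
        (simp_all add: apply_AD_def query_def adj_def case_prod_unfold continuous_intros)
  qed
qed

lemma borel_measurable_adv: "adv q A \<in> borel_measurable borel"
proof (rule borel_measurable_continuous_onI)
  show "continuous_on UNIV (adv q A)"
    unfolding adv_def rho0_def psi1_def case_prod_unfold
    by (intro continuous_intros continuous_on_run)
qed

lemma continuous_on_mat_mult [continuous_intros]:
  fixes f :: "'a::topological_space \<Rightarrow> 'r::real_normed_algebra_1^'k::finite^'m::finite"
    and g :: "'a \<Rightarrow> 'r^'n::finite^'k"
  assumes "continuous_on S f" "continuous_on S g"
  shows "continuous_on S (\<lambda>x. f x ** g x)"
  unfolding matrix_matrix_mult_def by (intro continuous_intros assms)

lemma measurable_pair_measure_borel:
  assumes "sets M = sets borel" "sets N = sets borel"
  shows "measurable (M \<Otimes>\<^sub>M N) K =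
    measurable (borel :: ('a::second_countable_topology \<times> 'b::second_countable_topology) measure) K"
  using measurable_cong_sets[OF sets_pair_measure_cong[OF assms] refl] by (simp add: borel_prod)

lemma haar_nn_integral_left_mult:
  fixes g :: "complex^'n::finite^'n \<Rightarrow> ennreal"
  assumes "haar H" "unitary_mat V" "g \<in> borel_measurable borel"
  shows "(\<integral>\<^sup>+W. g (V ** W) \<partial>H) = (\<integral>\<^sup>+U. g U \<partial>H)"
proof -
  have sets: "sets H = sets borel" and invariant: "distr H borel (\<lambda>U. V ** U) = H"
    using assms(1,2) unfolding haar_def by auto
  have "(\<lambda>U. V ** U) \<in> measurable H borel"
    unfolding measurable_cong_sets[OF sets refl]
    by (intro borel_measurable_continuous_onI continuous_intros)
  then have "(\<integral>\<^sup>+W. g (V ** W) \<partial>H) = (\<integral>\<^sup>+U. g U \<partial>distr H borel (\<lambda>U. V ** U))"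
    using assms(3) by (simp add: nn_integral_distr)
  then show ?thesis
    unfolding invariant .
qed

lemma haar_nn_integral_average:
  fixes g :: "complex^'n::finite^'n \<Rightarrow> ennreal"
  assumes H: "haar H" and D: "prob_space D" "sets D = sets borel" "AE V in D. unitary_mat V"
    and g: "g \<in> borel_measurable borel"
  shows "(\<integral>\<^sup>+W. (\<integral>\<^sup>+V. g (V ** W) \<partial>D) \<partial>H) = (\<integral>\<^sup>+U. g U \<partial>H)"
proof -
  have H_sets: "sets H = sets borel" and "prob_space H"
    using H unfolding haar_def by auto
  then interpret DH: pair_sigma_finite D H
    using D(1) by (simp add: pair_sigma_finite_def prob_space_imp_sigma_finite)
  have "(\<lambda>(V, W). g (V ** W)) \<in> borel_measurable (D \<Otimes>\<^sub>M H)"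
    unfolding measurable_pair_measure_borel[OF D(2) H_sets] case_prod_unfold
    by (intro measurable_compose[OF _ g] borel_measurable_continuous_onI continuous_intros)
  then have "(\<integral>\<^sup>+W. (\<integral>\<^sup>+V. g (V ** W) \<partial>D) \<partial>H) = (\<integral>\<^sup>+V. (\<integral>\<^sup>+W. g (V ** W) \<partial>H) \<partial>D)"
    by (rule DH.Fubini')
  also have "\<dots> = (\<integral>\<^sup>+V. (\<integral>\<^sup>+U. g U \<partial>H) \<partial>D)"
    using D(3) by (intro nn_integral_cong_AE)
      (auto elim!: eventually_mono simp: haar_nn_integral_left_mult[OF H _ g])
  also have "\<dots> = (\<integral>\<^sup>+U. g U \<partial>H)"
    using D(1) by (simp add: prob_space.emeasure_space_1)
  finally show ?thesis .
qed

lemma (in prob_space) exists_ge_nn_integral: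
  assumes f: "f \<in> borel_measurable M" and P: "AE x in M. P x"
    and c: "c \<le> (\<integral>\<^sup>+x. f x \<partial>M)" "c \<noteq> \<infinity>"
  shows "\<exists>x. P x \<and> c \<le> f x"
proof (rule ccontr)
  assume "\<not> ?thesis"
  then have less: "AE x in M. f x < c"
    using P by (auto simp: not_le elim!: eventually_mono)
  then have le: "AE x in M. f x \<le> c"
    by eventually_elim simp
  have "(\<integral>\<^sup>+x. f x \<partial>M) < (\<integral>\<^sup>+x. c \<partial>M)"
  proof (rule nn_integral_less[OF f borel_measurable_const _ le])
    have "(\<integral>\<^sup>+x. f x \<partial>M) \<le> (\<integral>\<^sup>+x. c \<partial>M)"
      using le by (rule nn_integral_mono_AE)
    then show "(\<integral>\<^sup>+x. f x \<partial>M) \<noteq> \<infinity>"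
      using c(2) by (auto simp: emeasure_space_1 top_unique)
    show "\<not> (AE x in M. c \<le> f x)"
    proof
      assume "AE x in M. c \<le> f x"
      with less have "AE x in M. False"
        by eventually_elim simp
      then show False
        by (simp add: AE_False)
    qed
  qed
  then show False
    using c(1) by (simp add: emeasure_space_1)
qed

lemma borel_measurable_nn_integral_right_mult:
  fixes g :: "complex^'n::finite^'n \<Rightarrow> ennreal"
  assumes "prob_space D" "sets D = sets borel" "sets H = sets borel" "g \<in> borel_measurable borel"
  shows "(\<lambda>W. \<integral>\<^sup>+V. g (V ** W) \<partial>D) \<in> borel_measurable H"
proof -
  have "(\<lambda>(W, V). g (V ** W)) \<in> borel_measurable (H \<Otimes>\<^sub>M D)"
    unfolding measurable_pair_measure_borel[OF assms(3,2)] case_prod_unfold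
    by (intro measurable_compose[OF _ assms(4)] borel_measurable_continuous_onI continuous_intros)
  then show ?thesis
    by (rule sigma_finite_measure.borel_measurable_nn_integral[OF prob_space_imp_sigma_finite[OF assms(1)]])
qed

lemma le_integral_of_le_nn_integral:
  fixes f :: "'a \<Rightarrow> real"
  assumes "f \<in> borel_measurable M" "\<And>x. 0 \<le> f x"
    and "ennreal c \<le> (\<integral>\<^sup>+x. f x \<partial>M)" "(\<integral>\<^sup>+x. f x \<partial>M) \<noteq> \<infinity>"
  shows "c \<le> (\<integral>x. f x \<partial>M)"
proof -
  have "integrable M f"
    using assms by (intro integrableI_nonneg) (auto simp: less_top)
  then have "(\<integral>\<^sup>+x. f x \<partial>M) = ennreal (\<integral>x. f x \<partial>M)"
    using assms(2) by (simp add: nn_integral_eq_integral)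
  then show ?thesis
    using assms(2,3) by (simp add: ennreal_le_iff integral_nonneg_AE)
qed

lemma haar_exists_unitary_shift_integral_ge:
  fixes g :: "complex^'n::finite^'n \<Rightarrow> real"
  assumes H: "haar H" and D: "prob_space D" "sets D = sets borel" "AE V in D. unitary_mat V"
    and g: "g \<in> borel_measurable borel" "\<And>U. 0 \<le> g U" and \<epsilon>: "\<epsilon> \<le> (\<integral>U. g U \<partial>H)"
  shows "\<exists>W. unitary_mat W \<and> \<epsilon> \<le> (\<integral>V. g (V ** W) \<partial>D)"
proof (cases "\<epsilon> \<le> 0")
  case True
  then show ?thesis
    using g(2) by (intro exI[of _ "mat 1"])
      (auto simp: unitary_mat_one intro: order_trans[OF True] integral_nonneg_AE)
next
  case False
  interpret H: prob_space H
    using H by (simp add: haar_def)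
  have "integrable H g"
    using False \<epsilon> not_integrable_integral_eq by force
  then have nn_g: "(\<integral>\<^sup>+U. ennreal (g U) \<partial>H) = ennreal (\<integral>U. g U \<partial>H)"
    using g(2) by (simp add: nn_integral_eq_integral)
  define h where "h = (\<lambda>W. \<integral>\<^sup>+V. ennreal (g (V ** W)) \<partial>D)"
  have h_meas: "h \<in> borel_measurable H"
    unfolding h_def using H g(1)
    by (intro borel_measurable_nn_integral_right_mult D(1,2)) (auto simp: haar_def)
  have h_int: "(\<integral>\<^sup>+W. h W \<partial>H) = ennreal (\<integral>U. g U \<partial>H)"
    unfolding h_def nn_g[symmetric] using g(1)
    by (intro haar_nn_integral_average[OF H D]) measurable
  have "AE W in H. h W \<noteq> \<infinity>"
    using nn_integral_noteq_infinite[OF h_meas] h_int by simp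
  moreover have "AE W in H. unitary_mat W"
    using H by (simp add: haar_def)
  ultimately have "AE W in H. unitary_mat W \<and> h W \<noteq> \<infinity>"
    by (rule AE_conjI[rotated])
  moreover have "ennreal \<epsilon> \<le> (\<integral>\<^sup>+W. h W \<partial>H)"
    unfolding h_int using \<epsilon> by (rule ennreal_leI)
  ultimately have "\<exists>W. (unitary_mat W \<and> h W \<noteq> \<infinity>) \<and> ennreal \<epsilon> \<le> h W"
    by (intro H.exists_ge_nn_integral[OF h_meas]) simp_all
  then obtain W where W: "unitary_mat W" "h W \<noteq> \<infinity>" "ennreal \<epsilon> \<le> h W"
    by blast
  have "(\<lambda>V. g (V ** W)) \<in> borel_measurable D"
    unfolding measurable_cong_sets[OF D(2) refl]
    by (intro measurable_compose[OF _ g(1)] borel_measurable_continuous_onI continuous_intros)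
  then have "\<epsilon> \<le> (\<integral>V. g (V ** W) \<partial>D)"
    using g(2) W(3,2) unfolding h_def by (rule le_integral_of_le_nn_integral)
  then show ?thesis
    using W(1) by blast
qed

theorem mainTheorem17:
  fixes H D :: "(complex^'n::finite^'n) measure" and A0 :: "'n alg" and q :: nat and \<epsilon> :: real
  assumes "haar H"
    and "valid_alg q A0"
    and "(\<integral>U. adv q A0 U \<partial>H) \<ge> \<epsilon>"
    and "prob_space D" and "sets D = sets borel" and "AE V in D. unitary_mat V"
  shows "\<exists>A1 :: 'n alg. valid_alg q A1 \<and> (\<integral>V. adv q A1 V \<partial>D) \<ge> \<epsilon>"
proof -
  obtain W where "unitary_mat W" "\<epsilon> \<le> (\<integral>V. adv q A0 (V ** W) \<partial>D)"
    using haar_exists_unitary_shift_integral_ge[OF assms(1,4,5,6) borel_measurable_adv adv_nonneg]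
      assms(3) by blast
  then show ?thesis
    using valid_shift_alg[OF assms(2)] by (intro exI[of _ "shift_alg q W A0"]) (simp add: adv_shift_alg)
qed

end
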